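(* Consider the delay differential system \[ \begin{aligned} \dot T(t)&= s-dT(t)+aT(t)\Big(1-\frac{T(t)+I(t)}{T_{\max}}\Big)-\frac{bT(t)V(t)}{1+\alpha V(t)},\\ \dot I(t)&= \frac{bT(t-\tau)V(t-\tau)}{1+\alpha V(t-\tau)}+aI(t)\Big(1-\frac{T(t)+I(t)}{T_{\max}}\Big)-\mu I(t),\\ \dot V(t)&= pI(t)-cV(t), \end{aligned} \] with positive constants $s,d,a,T_{\max},b,\alpha,\mu,p,c$ and $\tau\ge0$. Let \[ T_0=\frac{T_{\max}}{2a}\Big(a-d+\sqrt{(a-d)^2+\tfrac{4as}{T_{\max}}}\Big),\qquad R_0=\frac{1}{\mu}\Big[\frac{bpT_0}{c}+a\Big(1-\frac{T_0}{T_{\max}}\Big)\Big]. \] If $R_0>1$, then the system has a unique equilibrium $(T_2,I_2,V_2)$ with $T_2>0$, $I_2>0$, $V_2>0$ (an infected equilibrium).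
   Context: Equilibria are constant solutions of the system (they do not depend on $\tau$). $R_0$ is called the basic reproductive number. *)

theory Defs
  imports Complex_Main
begin

definition is_solution ::
  "real \<Rightarrow> real \<Rightarrow> real \<Rightarrow> real \<Rightarrow> real \<Rightarrow> real \<Rightarrow> real \<Rightarrow> real \<Rightarrow> real \<Rightarrow> real \<Rightarrow>
   (real \<Rightarrow> real) \<Rightarrow> (real \<Rightarrow> real) \<Rightarrow> (real \<Rightarrow> real) \<Rightarrow> bool" where
  "is_solution s d a Tmax b \<alpha> \<mu> p c \<tau> T I V \<longleftrightarrow>
     (\<forall>t. (T has_real_derivative
             (s - d * T t + a * T t * (1 - (T t + I t) / Tmax) - b * T t * V t / (1 + \<alpha> * V t))) (at t)
        \<and> (I has_real_derivative
             (b * T (t - \<tau>) * V (t - \<tau>) / (1 + \<alpha> * V (t - \<tau>))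
              + a * I t * (1 - (T t + I t) / Tmax) - \<mu> * I t)) (at t)
        \<and> (V has_real_derivative (p * I t - c * V t)) (at t))"

definition is_equilibrium ::
  "real \<Rightarrow> real \<Rightarrow> real \<Rightarrow> real \<Rightarrow> real \<Rightarrow> real \<Rightarrow> real \<Rightarrow> real \<Rightarrow> real \<Rightarrow> real \<Rightarrow>
   real \<times> real \<times> real \<Rightarrow> bool" where
  "is_equilibrium s d a Tmax b \<alpha> \<mu> p c \<tau> e \<longleftrightarrow>
     (case e of (T0, I0, V0) \<Rightarrow>
        is_solution s d a Tmax b \<alpha> \<mu> p c \<tau> (\<lambda>_. T0) (\<lambda>_. I0) (\<lambda>_. V0))"

definition T0_val :: "real \<Rightarrow> real \<Rightarrow> real \<Rightarrow> real \<Rightarrow> real" where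
  "T0_val s d a Tmax = Tmax / (2 * a) * (a - d + sqrt ((a - d)^2 + 4 * a * s / Tmax))"

definition R0_val ::
  "real \<Rightarrow> real \<Rightarrow> real \<Rightarrow> real \<Rightarrow> real \<Rightarrow> real \<Rightarrow> real \<Rightarrow> real \<Rightarrow> real" where
  "R0_val s d a Tmax b \<mu> p c =
     (1 / \<mu>) * (b * p * T0_val s d a Tmax / c + a * (1 - T0_val s d a Tmax / Tmax))"

end

theory Submission
  imports Defs
begin

text \<open>At an equilibrium V = pI/c, so the incidence b T V / (1 + \<alpha> V) equals T I h(I) with the
  decreasing rate h(I) = bp / (c + \<alpha> p I), while I h(I) is increasing. The equilibrium conditions
  for T > 0, I > 0 reduce to two equations in (T, I). Eliminating T through the positive root of the
  quadratic coming from the T-equation leaves the per-capita growth rate net_growth(I) of the infected cells,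
  which equals \<mu> (R0 - 1) at I = 0 and is negative for large I; the intermediate value theorem gives a
  root. For uniqueness, two solutions with I1 < I2 would force T1 > T2 and then T1 + I1 > T2 + I2,
  contradicting the identity h(I) (T + I) = \<mu> - d + s / T satisfied by every solution.\<close>

lemma const_has_real_derivative_iff:
  "((\<lambda>_. k::real) has_real_derivative D) (at t) \<longleftrightarrow> D = 0"
  using DERIV_unique DERIV_const by blast

lemma is_equilibrium_iff:
  "is_equilibrium s d a Tmax b \<alpha> \<mu> p c \<tau> (T, I, V) \<longleftrightarrow>
     s - d * T + a * T * (1 - (T + I) / Tmax) - b * T * V / (1 + \<alpha> * V) = 0
   \<and> b * T * V / (1 + \<alpha> * V) + a * I * (1 - (T + I) / Tmax) - \<mu> * I = 0
   \<and> p * I - c * V = 0"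
  unfolding is_equilibrium_def is_solution_def
  by (simp only: const_has_real_derivative_iff prod.case) simp

lemma quadratic_positive_root:
  fixes A B s :: real
  assumes "A > 0" "s > 0"
  defines "t \<equiv> (sqrt (B^2 + 4*A*s) - B) / (2*A)"
  shows "A * t^2 + B * t - s = 0" "t > 0"
proof -
  define r where "r = sqrt (B^2 + 4*A*s)"
  have nn: "0 \<le> B^2 + 4*A*s" using assms by (simp add: add_nonneg_nonneg)
  have r2: "r^2 = B^2 + 4*A*s" unfolding r_def using nn by simp
  have "A * t^2 + B * t - s = (r^2 - B^2 - 4*A*s) / (4*A)"
    unfolding t_def r_def[symmetric] using assms by (simp add: field_simps power2_eq_square)
  then show "A * t^2 + B * t - s = 0" using r2 by simp
  have "B < r"
  proof (rule ccontr)
    assume "\<not> B < r"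
    moreover have "r \<ge> 0" unfolding r_def using nn by simp
    ultimately have "r^2 \<le> B^2" by (simp add: power_mono)
    then show False using r2 assms by (smt (verit) mult_pos_pos)
  qed
  then show "t > 0" unfolding t_def r_def[symmetric] using assms by simp
qed

locale cell_virus_params =
  fixes s d a Tmax b \<alpha> \<mu> p c :: real
  assumes pos: "s > 0" "d > 0" "a > 0" "Tmax > 0" "b > 0" "\<alpha> > 0" "\<mu> > 0" "p > 0" "c > 0"
begin

definition infection_rate :: "real \<Rightarrow> real" where
  "infection_rate I = b * p / (c + \<alpha> * p * I)"

lemma infection_rate_pos: "I \<ge> 0 \<Longrightarrow> infection_rate I > 0"
  unfolding infection_rate_def using pos by (simp add: add_pos_nonneg)

lemma infection_rate_le: "I \<ge> 0 \<Longrightarrow> infection_rate I \<le> b * p / c"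
  unfolding infection_rate_def using pos by (intro divide_left_mono) (auto simp: add_pos_nonneg)

lemma infection_rate_strict_antimono: "0 \<le> x \<Longrightarrow> x < y \<Longrightarrow> infection_rate y < infection_rate x"
  unfolding infection_rate_def using pos
  by (intro divide_strict_left_mono) (auto simp: add_pos_nonneg)

lemma mult_infection_rate_strict_mono:
  assumes "0 \<le> x" "x < y"
  shows "x * infection_rate x < y * infection_rate y"
proof -
  have "x * c < y * c" using assms pos by simp
  then have "(x * (b*p)) * (c + \<alpha>*p*y) < (y * (b*p)) * (c + \<alpha>*p*x)"
    using pos by (simp add: algebra_simps)
  then show ?thesis unfolding infection_rate_def using pos assms
    by (simp add: field_simps add_pos_nonneg)
qed

lemma incidence_eq:
  assumes "V = p * I / c" "I \<ge> 0"
  shows "b * T * V / (1 + \<alpha> * V) = T * I * infection_rate I"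
  unfolding assms(1) infection_rate_def using pos assms(2) by (simp add: field_simps add_pos_nonneg)

text \<open>The T-equation divided by T and the I-equation divided by I.\<close>
definition reduced_equilibrium :: "real \<Rightarrow> real \<Rightarrow> bool" where
  "reduced_equilibrium T I \<longleftrightarrow> T > 0 \<and> I > 0
     \<and> s / T - d + a * (1 - (T + I) / Tmax) = I * infection_rate I
     \<and> T * infection_rate I + a * (1 - (T + I) / Tmax) = \<mu>"

lemma positive_equilibrium_iff:
  "(is_equilibrium s d a Tmax b \<alpha> \<mu> p c \<tau> (T, I, V) \<and> T > 0 \<and> I > 0 \<and> V > 0)
   \<longleftrightarrow> reduced_equilibrium T I \<and> V = p * I / c"
proof (cases "T > 0 \<and> I > 0 \<and> V = p * I / c")
  case True
  then have "T > 0" "I > 0" and V: "V = p * I / c" by auto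
  have "V > 0" using V \<open>I > 0\<close> pos by simp
  have "s - d * T + a * T * (1 - (T + I) / Tmax) - T * I * infection_rate I
        = T * (s / T - d + a * (1 - (T + I) / Tmax) - I * infection_rate I)"
    using \<open>T > 0\<close> by (simp add: field_simps)
  moreover have "T * I * infection_rate I + a * I * (1 - (T + I) / Tmax) - \<mu> * I
        = I * (T * infection_rate I + a * (1 - (T + I) / Tmax) - \<mu>)"
    by (simp add: algebra_simps)
  ultimately show ?thesis
    unfolding is_equilibrium_iff reduced_equilibrium_def incidence_eq[OF V less_imp_le[OF \<open>I > 0\<close>]]
    using True \<open>V > 0\<close> pos by auto
next
  case False
  moreover have "p * I - c * V = 0 \<longleftrightarrow> V = p * I / c" using pos by (auto simp: field_simps)
  ultimately show ?thesis unfolding is_equilibrium_iff reduced_equilibrium_def by auto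
qed

lemma reduced_equilibrium_not_less:
  assumes E1: "reduced_equilibrium T1 I1" and E2: "reduced_equilibrium T2 I2"
  shows "\<not> I1 < I2"
proof
  assume lt: "I1 < I2"
  define h1 h2 where "h1 = infection_rate I1" and "h2 = infection_rate I2"
  from E1 E2 have pos12: "T1 > 0" "T2 > 0" "I1 > 0" "I2 > 0"
    and F11: "s/T1 - d + a*(1-(T1+I1)/Tmax) = I1*h1"
    and F12: "s/T2 - d + a*(1-(T2+I2)/Tmax) = I2*h2"
    and F21: "T1*h1 + a*(1-(T1+I1)/Tmax) = \<mu>"
    and F22: "T2*h2 + a*(1-(T2+I2)/Tmax) = \<mu>"
    unfolding reduced_equilibrium_def h1_def h2_def by auto
  have hlt: "h2 < h1" "h2 > 0" unfolding h1_def h2_def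
    using infection_rate_strict_antimono infection_rate_pos pos12 lt by auto
  have glt: "I1 * h1 < I2 * h2" unfolding h1_def h2_def
    using mult_infection_rate_strict_mono pos12 lt by simp
  have TT: "T2 < T1"
  proof (rule ccontr)
    assume "\<not> T2 < T1"
    then have le: "T1 \<le> T2" by simp
    have "s/T2 \<le> s/T1" using le pos pos12 by (simp add: frac_le)
    moreover have "a*(T1+I1)/Tmax < a*(T2+I2)/Tmax"
      using le lt pos by (simp add: divide_strict_right_mono)
    ultimately show False using F11 F12 glt by (simp add: diff_divide_distrib algebra_simps)
  qed
  have "T2*h2 < T1*h1" using TT hlt pos12 by (simp add: mult_strict_mono)
  then have "a*(T2+I2)/Tmax < a*(T1+I1)/Tmax"
    using F21 F22 by (simp add: algebra_simps diff_divide_distrib)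
  then have "T2+I2 < T1+I1" using pos by (auto simp: divide_less_cancel mult_less_cancel_left)
  then have "h2*(T2+I2) < h1*(T1+I1)" using hlt pos12 by (simp add: mult_strict_mono)
  moreover have "s/T1 < s/T2" using TT pos pos12 by (simp add: divide_strict_left_mono)
  \<comment> \<open>subtracting the two reduced equations eliminates the logistic term\<close>
  moreover have "h1*(T1+I1) = \<mu> - d + s/T1" using F11 F21 by (simp add: algebra_simps)
  moreover have "h2*(T2+I2) = \<mu> - d + s/T2" using F12 F22 by (simp add: algebra_simps)
  ultimately show False by linarith
qed

lemma reduced_equilibrium_unique:
  assumes E1: "reduced_equilibrium T1 I1" and E2: "reduced_equilibrium T2 I2"
  shows "T1 = T2 \<and> I1 = I2"
proof
  show I: "I1 = I2"
    using reduced_equilibrium_not_less[OF E1 E2] reduced_equilibrium_not_less[OF E2 E1] by linarith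
  have T1: "T1 > 0" and T2: "T2 > 0" using E1 E2 unfolding reduced_equilibrium_def by auto
  have eq: "s/T1 - a*T1/Tmax = s/T2 - a*T2/Tmax" using E1 E2 I
    unfolding reduced_equilibrium_def by (simp add: algebra_simps diff_divide_distrib add_divide_distrib)
  have "s/T' - a*T'/Tmax < s/T - a*T/Tmax" if "0 < T" "T < T'" for T T'
  proof -
    have "s/T' < s/T" using that pos by (simp add: divide_strict_left_mono)
    moreover have "a*T/Tmax < a*T'/Tmax" using that pos by (simp add: divide_strict_right_mono)
    ultimately show ?thesis by linarith
  qed
  from this[OF T1] this[OF T2] eq show "T1 = T2" by (metis linorder_neqE_linordered_idom order.irrefl)
qed
text \<open>The positive root of the T-equation (negated) at a prescribed infected level I.\<close>
definition susceptible_level :: "real \<Rightarrow> real" where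
  "susceptible_level I =
     (let A = a / Tmax; B = d - a + a * I / Tmax + I * infection_rate I
      in (sqrt (B^2 + 4 * A * s) - B) / (2 * A))"

definition net_growth :: "real \<Rightarrow> real" where
  "net_growth I = infection_rate I * susceptible_level I
     + a * (1 - (susceptible_level I + I) / Tmax) - \<mu>"

lemma susceptible_level_quadratic:
  "(a / Tmax) * (susceptible_level I)^2 + (d - a + a * I / Tmax + I * infection_rate I) * susceptible_level I
     - s = 0"
  and susceptible_level_pos: "susceptible_level I > 0"
  using quadratic_positive_root[of "a / Tmax" s] pos unfolding susceptible_level_def Let_def by auto

lemma susceptible_level_eq:
  "s / susceptible_level I - d + a * (1 - (susceptible_level I + I) / Tmax) = I * infection_rate I"
proof -
  let ?T = "susceptible_level I"
  have "s / ?T - d + a * (1 - (?T + I) / Tmax) - I * infection_rate I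
        = - ((a / Tmax) * ?T^2 + (d - a + a * I / Tmax + I * infection_rate I) * ?T - s) / ?T"
    using susceptible_level_pos[of I] pos by (simp add: field_simps power2_eq_square)
  then show ?thesis using susceptible_level_quadratic[of I] by simp
qed

lemma reduced_equilibrium_if_net_growth_eq_0:
  "I > 0 \<Longrightarrow> net_growth I = 0 \<Longrightarrow> reduced_equilibrium (susceptible_level I) I"
  unfolding reduced_equilibrium_def net_growth_def
  using susceptible_level_pos susceptible_level_eq by (simp add: mult.commute)

lemma susceptible_level_0: "susceptible_level 0 = T0_val s d a Tmax"
proof -
  have "(d - a)^2 + 4 * (a / Tmax) * s = (a - d)^2 + 4 * a * s / Tmax"
    by (simp add: power2_commute)
  then show ?thesis unfolding susceptible_level_def T0_val_def Let_def
    using pos by (simp add: field_simps)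
qed

lemma net_growth_0: "net_growth 0 = \<mu> * (R0_val s d a Tmax b \<mu> p c - 1)"
  unfolding net_growth_def R0_val_def susceptible_level_0 infection_rate_def
  using pos by (simp add: field_simps)

lemma susceptible_level_le:
  assumes "I \<ge> 0"
  shows "susceptible_level I \<le> Tmax + s / a"
proof (rule ccontr)
  let ?T = "susceptible_level I"
  assume "\<not> ?T \<le> Tmax + s / a"
  then have gt: "a * (?T - Tmax) > s" using pos by (simp add: field_simps)
  then have "?T > Tmax" using pos by (smt (verit) mult_nonneg_nonpos)
  have "-a \<le> d - a + a * I / Tmax + I * infection_rate I"
    using pos assms infection_rate_pos[OF assms] by (simp add: add_nonneg_nonneg)
  then have "-a * ?T \<le> (d - a + a * I / Tmax + I * infection_rate I) * ?T"
    using susceptible_level_pos[of I] by (metis less_imp_le mult_minus_left mult_right_mono)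
  then have "a * ?T * (?T - Tmax) / Tmax \<le> s"
    using susceptible_level_quadratic[of I] pos by (simp add: field_simps power2_eq_square)
  moreover have "a * (?T - Tmax) * 1 < a * (?T - Tmax) * (?T / Tmax)"
    using \<open>?T > Tmax\<close> pos by (intro mult_strict_left_mono) auto
  ultimately show False using gt by (simp add: field_simps)
qed

lemma net_growth_neg: "\<exists>M \<ge> 0. net_growth M < 0"
proof (intro exI conjI)
  define K where "K = Tmax + s / a"
  define M where "M = Tmax / a * (b * p / c * K + a + 1)"
  have "M \<ge> 0" unfolding M_def K_def using pos by (simp add: add_nonneg_nonneg)
  then show "0 \<le> M" .
  have "infection_rate M * susceptible_level M \<le> b * p / c * K"
    unfolding K_def using infection_rate_le infection_rate_pos susceptible_level_le susceptible_level_pos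
      \<open>M \<ge> 0\<close> by (meson less_imp_le mult_mono order.trans)
  moreover have "a * (1 - (susceptible_level M + M) / Tmax) \<le> a - a * M / Tmax"
    using susceptible_level_pos[of M] pos by (simp add: field_simps)
  moreover have "a * M / Tmax = b * p / c * K + a + 1" unfolding M_def using pos by simp
  ultimately show "net_growth M < 0" unfolding net_growth_def using pos by linarith
qed

lemma continuous_on_net_growth: "continuous_on {0..} net_growth"
proof -
  have "c + \<alpha> * p * I \<noteq> 0" if "I \<in> {0..}" for I
    using pos that by (smt (verit) atLeast_iff mult_nonneg_nonneg)
  then show ?thesis
    unfolding net_growth_def susceptible_level_def infection_rate_def Let_def
    using pos by (intro continuous_intros) auto
qed

lemma reduced_equilibrium_exists:
  assumes "R0_val s d a Tmax b \<mu> p c > 1"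
  shows "\<exists>T I. reduced_equilibrium T I"
proof -
  obtain M where "M \<ge> 0" "net_growth M < 0" using net_growth_neg by blast
  moreover have "net_growth 0 > 0" using assms pos by (simp add: net_growth_0)
  moreover have "continuous_on {0..M} net_growth"
    using continuous_on_net_growth by (rule continuous_on_subset) auto
  ultimately obtain I where "0 \<le> I" "net_growth I = 0"
    using IVT2'[of net_growth M 0 0] by auto
  moreover from this have "I > 0" using \<open>net_growth 0 > 0\<close> by (cases "I = 0") auto
  ultimately show ?thesis using reduced_equilibrium_if_net_growth_eq_0 by blast
qed

end

theorem mainTheorem2:
  fixes s d a Tmax b \<alpha> \<mu> p c \<tau> :: real
  assumes "s > 0" "d > 0" "a > 0" "Tmax > 0" "b > 0" "\<alpha> > 0" "\<mu> > 0" "p > 0" "c > 0"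
    and "\<tau> \<ge> 0"
    and "R0_val s d a Tmax b \<mu> p c > 1"
  shows "\<exists>!e. is_equilibrium s d a Tmax b \<alpha> \<mu> p c \<tau> e
               \<and> fst e > 0 \<and> fst (snd e) > 0 \<and> snd (snd e) > 0"
proof -
  interpret cell_virus_params s d a Tmax b \<alpha> \<mu> p c
    using assms by unfold_locales
  have eq_iff: "is_equilibrium s d a Tmax b \<alpha> \<mu> p c \<tau> e \<and> fst e > 0 \<and> fst (snd e) > 0 \<and> snd (snd e) > 0
      \<longleftrightarrow> (\<exists>T I. reduced_equilibrium T I \<and> e = (T, I, p * I / c))" for e
    using positive_equilibrium_iff by (cases e) auto
  obtain T I where "reduced_equilibrium T I"
    using reduced_equilibrium_exists assms(11) by blast
  then show ?thesis
    unfolding eq_iff using reduced_equilibrium_unique by blast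
qed

end
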